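(* Let $k\ge1$, $\alpha\in\mathbb Z$ with $(\alpha,k)=1$, and $p_1,p_2,p_3\in\mathbb Z$. Then $$A(p_1,p_2,p_3;\alpha;k)=k\sum_{f\mid(p_2,p_3,k)}f\,S\Big(p_1\overline{\alpha},\frac{p_2p_3}{f^2};\frac kf\Big),$$ where $\overline\alpha$ denotes an inverse of $\alpha$ modulo $k/f$.
   Context: $A(p_1,p_2,p_3;\alpha;k)=\sum_{x_1,x_2,x_3\bmod k}e\big(\frac{x_1x_2x_3\alpha-x_1p_1-x_2p_2-x_3p_3}{k}\big)$, $e(x)=e^{2\pi ix}$; $S(a,b;c)=\sum_{u\bmod c,(u,c)=1}e\big(\frac{au+b\bar u}{c}\big)$ is the Kloosterman sum; $(p_2,p_3,k)$ is the gcd (with $(0,0,k)=k$). *)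

theory Defs
  imports "HOL-Analysis.Analysis" "HOL-Number_Theory.Number_Theory"
begin

definition e :: "real \<Rightarrow> complex" where
  "e x = cis (2 * pi * x)"

definition Asum :: "int \<Rightarrow> int \<Rightarrow> int \<Rightarrow> int \<Rightarrow> int \<Rightarrow> complex" where
  "Asum p1 p2 p3 \<alpha> k =
     (\<Sum>x1\<in>{0..<k}. \<Sum>x2\<in>{0..<k}. \<Sum>x3\<in>{0..<k}.
        e (of_int (x1 * x2 * x3 * \<alpha> - x1 * p1 - x2 * p2 - x3 * p3) / of_int k))"

definition kloosterman :: "int \<Rightarrow> int \<Rightarrow> int \<Rightarrow> complex" where
  "kloosterman a b c =
     (\<Sum>u\<in>{u\<in>{0..<c}. coprime u c}.
        e (of_int (a * u + b * (SOME v. [u * v = 1] (mod c))) / of_int c))"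

end

theory Submission
  imports Defs "HOL-Library.Real_Mod"
begin

text \<open>
  Summing over \<open>x\<^sub>3\<close> first, orthogonality of additive characters leaves \<open>k\<close> times the sum of
  \<open>e((-x\<^sub>1p\<^sub>1 - x\<^sub>2p\<^sub>2)/k)\<close> over the pairs with \<open>x\<^sub>1x\<^sub>2\<alpha> \<equiv> p\<^sub>3 (mod k)\<close>. Group these by
  \<open>d = gcd x\<^sub>1 k\<close>, writing \<open>x\<^sub>1 = d u\<close> with \<open>u\<close> a unit modulo \<open>c = k/d\<close>. The congruence
  \<open>d u x\<^sub>2 \<alpha> \<equiv> p\<^sub>3 (mod dc)\<close> is solvable only if \<open>d | p\<^sub>3\<close>, and then its solutions form a
  single class \<open>x\<^sub>2 \<equiv> (u\<alpha>)\<^sup>-\<^sup>1 p\<^sub>3/d\<close> modulo \<open>c\<close>, i.e. \<open>d\<close> classes modulo \<open>k\<close>; summing the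
  character over them gives \<open>d\<close> if \<open>d | p\<^sub>2\<close> and \<open>0\<close> otherwise. What is left for each
  \<open>d | (p\<^sub>2,p\<^sub>3,k)\<close> is \<open>d\<close> times \<open>\<Sum>\<^sub>u e((-u p\<^sub>1 - (u\<alpha>)\<^sup>-\<^sup>1 p\<^sub>2p\<^sub>3/d\<^sup>2)/c)\<close>, which becomes
  the Kloosterman sum \<open>S(p\<^sub>1\<alpha>\<^sup>-\<^sup>1, p\<^sub>2p\<^sub>3/d\<^sup>2; c)\<close> after the substitution \<open>u \<mapsto> -\<alpha>u\<close>.
\<close>

section \<open>Additive characters\<close>

definition unity_root :: "int \<Rightarrow> int \<Rightarrow> complex" where
  "unity_root c a = e (of_int a / of_int c)"

lemma e_of_int [simp]: "e (of_int m) = 1"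
  unfolding e_def by (metis cis_multiple_2pi Ints_of_int)

lemma e_add: "e (x + y) = e x * e y"
  unfolding e_def by (simp add: cis_mult distrib_left)

lemma e_eq_1_iff: "e x = 1 \<longleftrightarrow> x \<in> \<int>"
proof
  assume "e x = 1"
  then obtain n where "2 * pi * x = of_int n * (2 * pi)"
    unfolding e_def cis_eq_1_iff by blast
  then show "x \<in> \<int>" by simp
qed (auto simp: e_def)

lemma unity_root_add: "unity_root c (a + b) = unity_root c a * unity_root c b"
  unfolding unity_root_def by (simp add: add_divide_distrib e_add)

lemma unity_root_cong:
  assumes "[a = b] (mod c)"
  shows "unity_root c a = unity_root c b"
proof -
  obtain t where "b = a + c * t"
    using assms cong_iff_lin by blast
  then show ?thesis
    by (cases "c = 0") (simp_all add: unity_root_def add_divide_distrib e_add)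
qed

lemma unity_root_mult_cancel: "d \<noteq> 0 \<Longrightarrow> unity_root (d * c) (d * a) = unity_root c a"
  unfolding unity_root_def by simp

lemma unity_root_power: "unity_root c a ^ m = unity_root c (int m * a)"
  unfolding unity_root_def e_def Complex.DeMoivre by (simp add: field_simps)

lemma unity_root_eq_1_iff:
  assumes "c \<noteq> 0"
  shows "unity_root c a = 1 \<longleftrightarrow> c dvd a"
proof
  assume "unity_root c a = 1"
  then obtain t where "of_int a / of_int c = (of_int t :: real)"
    unfolding unity_root_def e_eq_1_iff by (auto elim: Ints_cases)
  then have "a = c * t"
    using assms by (simp add: field_simps) (metis of_int_eq_iff of_int_mult)
  then show "c dvd a" ..
qed (use assms in \<open>auto simp: unity_root_def\<close>)

lemma sum_unity_root:
  assumes "c \<ge> 1"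
  shows "(\<Sum>x\<in>{0..<c}. unity_root c (x * n)) = (if c dvd n then of_int c else 0)"
proof -
  have "{0..<c} = int ` {..<nat c}"
    using assms by (simp add: image_int_atLeastLessThan lessThan_atLeast0)
  then have sum: "(\<Sum>x\<in>{0..<c}. unity_root c (x * n)) = (\<Sum>m<nat c. unity_root c n ^ m)"
    by (simp add: sum.reindex unity_root_power)
  show ?thesis
  proof (cases "c dvd n")
    case True
    then show ?thesis
      using assms sum unity_root_eq_1_iff[of c n] by simp
  next
    case False
    have "unity_root c n ^ nat c = unity_root c (c * n)"
      using assms by (simp add: unity_root_power)
    also have "\<dots> = 1"
      using assms by (simp add: unity_root_eq_1_iff)
    finally show ?thesis
      using assms sum False unity_root_eq_1_iff[of c n] by (simp add: geometric_sum)
  qed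
qed

lemma sum_unity_root_progression:
  assumes "d > 0" "c > 0"
  shows "(\<Sum>j\<in>{0..<d}. unity_root (d * c) (a + c * j * n)) =
         (if d dvd n then of_int d * unity_root (d * c) a else 0)"
proof -
  have "unity_root (d * c) (a + c * j * n) = unity_root (d * c) a * unity_root d (j * n)" for j
    using unity_root_mult_cancel[of c d "j * n"] assms
    by (simp add: unity_root_add mult.commute mult.left_commute)
  then have "(\<Sum>j\<in>{0..<d}. unity_root (d * c) (a + c * j * n)) =
      unity_root (d * c) a * (\<Sum>j\<in>{0..<d}. unity_root d (j * n))"
    by (simp add: sum_distrib_left)
  then show ?thesis
    using assms sum_unity_root[of d n] by simp
qed

section \<open>Residues and inverses\<close>

lemma sum_atLeastLessThan_mult_split:
  fixes c d :: int
  assumes "c > 0" "d > 0"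
  shows "(\<Sum>x\<in>{0..<c * d}. F x) = (\<Sum>r\<in>{0..<c}. \<Sum>j\<in>{0..<d}. F (r + c * j))"
proof -
  have "bij_betw (\<lambda>(r, j). r + c * j) ({0..<c} \<times> {0..<d}) {0..<c * d}"
  proof (rule bij_betw_byWitness[where f' = "\<lambda>x. (x mod c, x div c)"])
    show "(\<lambda>(r, j). r + c * j) ` ({0..<c} \<times> {0..<d}) \<subseteq> {0..<c * d}"
    proof clarsimp
      fix r j assume "0 \<le> r" "r < c" "0 \<le> j" "j < d"
      then have "c * j \<le> c * (d - 1)"
        using assms by (intro mult_left_mono) auto
      then show "r + c * j < c * d"
        using \<open>r < c\<close> by (simp add: algebra_simps)
    qed
    have "x div c < d" if "x < c * d" for x
      using assms that by (smt (verit) minus_mod_eq_mult_div mult_left_less_imp_less pos_mod_sign)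
    then show "(\<lambda>x. (x mod c, x div c)) ` {0..<c * d} \<subseteq> {0..<c} \<times> {0..<d}"
      using assms by (auto simp: pos_imp_zdiv_nonneg_iff)
  qed (auto simp: mult.commute)
  then have "(\<Sum>x\<in>{0..<c * d}. F x) = (\<Sum>(r, j)\<in>{0..<c} \<times> {0..<d}. F (r + c * j))"
    by (simp add: sum.reindex_bij_betw[symmetric] case_prod_beta')
  then show ?thesis
    by (simp add: sum.cartesian_product)
qed

lemma finite_pos_divisors: "k \<noteq> 0 \<Longrightarrow> finite {d::int. d > 0 \<and> d dvd k}"
  by (rule finite_subset[of _ "{1..\<bar>k\<bar>}"]) (auto dest: dvd_imp_le_int)

definition reduced_residues :: "int \<Rightarrow> int set" where
  "reduced_residues c = {u \<in> {0..<c}. coprime u c}"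

lemma finite_reduced_residues [simp]: "finite (reduced_residues c)"
  by (rule finite_subset[of _ "{0..<c}"]) (auto simp: reduced_residues_def)

lemma sum_by_gcd:
  fixes k :: int
  assumes "k \<ge> 1"
  shows "(\<Sum>x\<in>{0..<k}. H x) =
         (\<Sum>d\<in>{d. d > 0 \<and> d dvd k}. \<Sum>u\<in>reduced_residues (k div d). H (d * u))"
proof -
  have divisors: "finite {d. d > 0 \<and> d dvd k}"
    using assms by (simp add: finite_pos_divisors)
  have gcd_divisor: "(\<lambda>x. gcd x k) ` {0..<k} \<subseteq> {d. d > 0 \<and> d dvd k}"
    using assms by auto
  have "(\<Sum>x\<in>{0..<k}. H x) =
      (\<Sum>d\<in>{d. d > 0 \<and> d dvd k}. \<Sum>x\<in>{x \<in> {0..<k}. gcd x k = d}. H x)"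
    by (rule sum.group[OF finite_atLeastLessThan_int divisors gcd_divisor, symmetric])
  also have "\<dots> = (\<Sum>d\<in>{d. d > 0 \<and> d dvd k}. \<Sum>u\<in>reduced_residues (k div d). H (d * u))"
  proof (rule sum.cong[OF refl])
    fix d assume "d \<in> {d. d > 0 \<and> d dvd k}"
    then have d: "d > 0" and "d dvd k" by auto
    define c where "c = k div d"
    have k: "k = d * c"
      unfolding c_def using \<open>d dvd k\<close> by simp
    have gcd_du: "gcd (d * u) k = d * gcd u c" for u
      using d gcd_mult_distrib_int[of d u c] by (simp only: k abs_of_pos)
    have image: "{x \<in> {0..<k}. gcd x k = d} = (\<lambda>u. d * u) ` reduced_residues c"
    proof (intro equalityI subsetI)
      fix x assume x: "x \<in> {x \<in> {0..<k}. gcd x k = d}"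
      then have "d dvd x"
        using gcd_dvd1[of x k] by simp
      then obtain u where u: "x = d * u" ..
      have "gcd u c = 1"
        using x u d gcd_du[of u] by simp
      moreover have "0 \<le> u"
        using x u d by (simp add: zero_le_mult_iff)
      moreover have "u < c"
        using x u k d by simp
      ultimately show "x \<in> (\<lambda>u. d * u) ` reduced_residues c"
        using u by (auto simp: reduced_residues_def coprime_iff_gcd_eq_1)
    next
      fix x assume "x \<in> (\<lambda>u. d * u) ` reduced_residues c"
      then obtain u where "x = d * u" "0 \<le> u" "u < c" "coprime u c"
        by (auto simp: reduced_residues_def)
      then show "x \<in> {x \<in> {0..<k}. gcd x k = d}"
        using d k gcd_du[of u] by simp
    qed
    have "inj_on (\<lambda>u. d * u) (reduced_residues c)"
      using d by (auto intro: inj_onI)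
    then show "(\<Sum>x\<in>{x \<in> {0..<k}. gcd x k = d}. H x) =
        (\<Sum>u\<in>reduced_residues (k div d). H (d * u))"
      unfolding image c_def[symmetric] by (simp add: sum.reindex)
  qed
  finally show ?thesis .
qed

lemma mod_mult_inverse_cancel:
  fixes a b c u :: int
  assumes "[a * b = 1] (mod c)" "u \<in> {0..<c}"
  shows "(b * ((a * u) mod c)) mod c = u"
proof -
  have "[b * ((a * u) mod c) = b * (a * u)] (mod c)"
    by (rule cong_scalar_left) (simp add: cong_def)
  also have "b * (a * u) = (a * b) * u"
    by (simp add: mult_ac)
  also have "[(a * b) * u = 1 * u] (mod c)"
    using assms(1) by (rule cong_scalar_right)
  finally show ?thesis
    using assms(2) by (simp add: cong_def)
qed

lemma bij_betw_mult_reduced_residues: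
  fixes a c :: int
  assumes "c > 0" "coprime a c"
  shows "bij_betw (\<lambda>u. (a * u) mod c) (reduced_residues c) (reduced_residues c)"
proof (rule bij_betw_byWitness[where f' = "\<lambda>v. (modular_inverse c a * v) mod c"])
  have inv: "[a * modular_inverse c a = 1] (mod c)" "[modular_inverse c a * a = 1] (mod c)"
    using assms(2) by (simp_all add: cong_modular_inverse1 cong_modular_inverse2)
  show "\<forall>u\<in>reduced_residues c. modular_inverse c a * (a * u mod c) mod c = u"
    using mod_mult_inverse_cancel[OF inv(1)] by (simp add: reduced_residues_def)
  show "\<forall>v\<in>reduced_residues c. a * (modular_inverse c a * v mod c) mod c = v"
    using mod_mult_inverse_cancel[OF inv(2)] by (simp add: reduced_residues_def)
qed (use assms in \<open>auto simp: reduced_residues_def\<close>)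

section \<open>Kloosterman sums\<close>

lemma kloosterman_modular_inverse:
  fixes a b c :: int
  assumes "c > 0"
  shows "kloosterman a b c =
         (\<Sum>u\<in>reduced_residues c. unity_root c (a * u + b * modular_inverse c u))"
  unfolding kloosterman_def reduced_residues_def unity_root_def[symmetric]
proof (rule sum.cong[OF refl], rule unity_root_cong)
  fix u assume "u \<in> {u \<in> {0..<c}. coprime u c}"
  then have "coprime u c" by simp
  let ?w = "SOME w. [u * w = 1] (mod c)"
  have "[u * ?w = 1] (mod c)"
    using cong_modular_inverse1[OF \<open>coprime u c\<close>] by (rule someI)
  then have "modular_inverse c u = ?w mod c"
    using assms by (intro modular_inverse_int_eqI) (auto simp: cong_def mod_mult_right_eq)
  then have "[?w = modular_inverse c u] (mod c)"
    by (simp add: cong_def)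
  then show "[a * u + b * ?w = a * u + b * modular_inverse c u] (mod c)"
    by (intro cong_add cong_refl cong_scalar_left)
qed

text \<open>The substitution \<open>u \<mapsto> -\<alpha>u\<close> turns \<open>a\<beta>u\<close> into \<open>-au\<close> and \<open>u\<^sup>-\<^sup>1\<close> into \<open>-(\<alpha>u)\<^sup>-\<^sup>1\<close>.\<close>

lemma kloosterman_reindex:
  fixes \<alpha> \<beta> a b c :: int
  assumes c: "c > 0" and \<beta>: "[\<alpha> * \<beta> = 1] (mod c)"
  shows "kloosterman (a * \<beta>) b c =
    (\<Sum>u\<in>reduced_residues c. unity_root c (- (a * u)) * unity_root c (- (b * modular_inverse c (\<alpha> * u))))"
proof -
  define g where "g v = unity_root c (a * \<beta> * v + b * modular_inverse c v)" for v
  have "coprime \<alpha> c"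
    using cong_imp_coprime[OF cong_sym[OF \<beta>]] by simp
  then have "coprime (- \<alpha>) c"
    by simp
  have "kloosterman (a * \<beta>) b c = (\<Sum>v\<in>reduced_residues c. g v)"
    unfolding g_def by (rule kloosterman_modular_inverse[OF c])
  also have "\<dots> = (\<Sum>u\<in>reduced_residues c. g ((- \<alpha> * u) mod c))"
    by (rule sum.reindex_bij_betw[OF bij_betw_mult_reduced_residues[OF c \<open>coprime (- \<alpha>) c\<close>], symmetric])
  also have "\<dots> = (\<Sum>u\<in>reduced_residues c.
      unity_root c (- (a * u)) * unity_root c (- (b * modular_inverse c (\<alpha> * u))))"
  proof (rule sum.cong[OF refl])
    fix u assume "u \<in> reduced_residues c"
    then have "coprime (\<alpha> * u) c"
      using \<open>coprime \<alpha> c\<close> by (simp add: reduced_residues_def)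
    define m where "m = modular_inverse c (\<alpha> * u)"
    define v where "v = (- \<alpha> * u) mod c"
    have v: "[v = - \<alpha> * u] (mod c)"
      by (simp add: v_def cong_def)
    have "[v * (- m) = (\<alpha> * u) * m] (mod c)"
      using cong_scalar_right[OF v, of "- m"] by simp
    also have "[(\<alpha> * u) * m = 1] (mod c)"
      unfolding m_def using \<open>coprime (\<alpha> * u) c\<close> by (rule cong_modular_inverse1)
    finally have "modular_inverse c v = (- m) mod c"
      using c by (intro modular_inverse_int_eqI) (auto simp: cong_def mod_mult_right_eq)
    then have inv_v: "[b * modular_inverse c v = - (b * m)] (mod c)"
      by (simp add: cong_def mod_mult_right_eq)
    have "[a * \<beta> * v = a * \<beta> * (- \<alpha> * u)] (mod c)"
      using v by (rule cong_scalar_left)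
    also have "a * \<beta> * (- \<alpha> * u) = (\<alpha> * \<beta>) * (- (a * u))"
      by (simp add: mult_ac)
    also have "[\<dots> = 1 * (- (a * u))] (mod c)"
      using \<beta> by (rule cong_scalar_right)
    finally have "[a * \<beta> * v = - (a * u)] (mod c)"
      by simp
    then have "g v = unity_root c (- (a * u) + - (b * m))"
      unfolding g_def by (intro unity_root_cong cong_add inv_v)
    then show "g ((- \<alpha> * u) mod c) = unity_root c (- (a * u)) * unity_root c (- (b * m))"
      by (simp only: v_def unity_root_add)
  qed
  finally show ?thesis .
qed

section \<open>Counting the solutions of \<open>x\<^sub>1x\<^sub>2\<alpha> \<equiv> p\<^sub>3\<close>\<close>

lemma Asum_eq_sum_solutions:
  fixes k \<alpha> p1 p2 p3 :: int
  assumes "k \<ge> 1"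
  shows "Asum p1 p2 p3 \<alpha> k = of_int k * (\<Sum>x1\<in>{0..<k}. \<Sum>x2\<in>{0..<k}.
     if k dvd x1 * x2 * \<alpha> - p3 then unity_root k (- (p1 * x1) - p2 * x2) else 0)"
proof -
  have "(\<Sum>x3\<in>{0..<k}. unity_root k (x1 * x2 * x3 * \<alpha> - x1 * p1 - x2 * p2 - x3 * p3)) =
        of_int k * (if k dvd x1 * x2 * \<alpha> - p3 then unity_root k (- (p1 * x1) - p2 * x2) else 0)"
    for x1 x2
  proof -
    have "x1 * x2 * x3 * \<alpha> - x1 * p1 - x2 * p2 - x3 * p3 =
          (- (p1 * x1) - p2 * x2) + x3 * (x1 * x2 * \<alpha> - p3)" for x3
      by (simp add: algebra_simps)
    then have "(\<Sum>x3\<in>{0..<k}. unity_root k (x1 * x2 * x3 * \<alpha> - x1 * p1 - x2 * p2 - x3 * p3)) =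
        unity_root k (- (p1 * x1) - p2 * x2) * (\<Sum>x3\<in>{0..<k}. unity_root k (x3 * (x1 * x2 * \<alpha> - p3)))"
      by (simp only: unity_root_add sum_distrib_left)
    then show ?thesis
      using sum_unity_root[OF assms, of "x1 * x2 * \<alpha> - p3"] by simp
  qed
  then show ?thesis
    by (simp only: Asum_def unity_root_def[symmetric] sum_distrib_left)
qed

text \<open>
  For \<open>t\<close> invertible modulo \<open>c\<close>, the solutions of \<open>d t x \<equiv> p\<^sub>3 (mod dc)\<close> exist only for
  \<open>d | p\<^sub>3\<close>, and are then the \<open>d\<close> residues \<open>x \<equiv> r\<^sub>0 (mod c)\<close> with \<open>r\<^sub>0 \<equiv> t\<^sup>-\<^sup>1 p\<^sub>3/d\<close>.
\<close>

lemma sum_linear_congruence_solutions: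
  fixes d c t w p2 p3 :: int
  assumes d: "d > 0" and c: "c > 0" and w: "[t * w = 1] (mod c)"
  shows "(\<Sum>x\<in>{0..<d * c}. if d * c dvd d * t * x - p3 then unity_root (d * c) (- (p2 * x)) else 0) =
    (if d dvd p2 \<and> d dvd p3 then of_int d * unity_root c (- ((p2 * p3 div d\<^sup>2) * w)) else 0)"
proof (cases "d dvd p3")
  case False
  have "d dvd d * t * x" for x
    by (simp add: mult.assoc)
  then have "\<not> d * c dvd d * t * x - p3" for x
    using False dvd_diff_right_iff dvd_mult_left by blast
  then show ?thesis
    using False by simp
next
  case True
  then obtain q where q: "p3 = d * q" ..
  define r0 where "r0 = (w * q) mod c"
  have "coprime w c"
    using cong_imp_coprime[OF cong_sym[OF w]] by simp
  have solution: "d * c dvd d * t * (r + c * j) - p3 \<longleftrightarrow> r = r0" if "r \<in> {0..<c}" for r j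
  proof -
    have "d * t * (r + c * j) - p3 = d * (t * r - q + t * j * c)"
      using q by (simp add: algebra_simps)
    then have "d * c dvd d * t * (r + c * j) - p3 \<longleftrightarrow> [t * r = q] (mod c)"
      using d by (simp add: cong_iff_dvd_diff cong_sym_eq)
    also have "\<dots> \<longleftrightarrow> [w * (t * r) = w * q] (mod c)"
      using cong_mult_lcancel[OF \<open>coprime w c\<close>] by (rule sym)
    also have "[w * (t * r) = r] (mod c)"
      using cong_scalar_right[OF w, of r] by (simp add: mult_ac)
    then have "[w * (t * r) = w * q] (mod c) \<longleftrightarrow> [r = w * q] (mod c)"
      by (meson cong_sym cong_trans)
    also have "\<dots> \<longleftrightarrow> r = r0"
      using that by (simp add: r0_def cong_def)
    finally show ?thesis .
  qed
  have r0: "r0 \<in> {0..<c}"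
    using c by (simp add: r0_def)
  have "(\<Sum>x\<in>{0..<d * c}. if d * c dvd d * t * x - p3 then unity_root (d * c) (- (p2 * x)) else 0) =
      (\<Sum>r\<in>{0..<c}. \<Sum>j\<in>{0..<d}. if d * c dvd d * t * (r + c * j) - p3
        then unity_root (d * c) (- (p2 * (r + c * j))) else 0)"
    using sum_atLeastLessThan_mult_split[OF c d] by (simp only: mult.commute[of d c])
  also have "\<dots> = (\<Sum>r\<in>{0..<c}. if r = r0 then \<Sum>j\<in>{0..<d}. unity_root (d * c) (- (p2 * (r + c * j))) else 0)"
    by (intro sum.cong refl) (simp add: solution)
  also have "\<dots> = (\<Sum>j\<in>{0..<d}. unity_root (d * c) (- (p2 * r0) + c * j * (- p2)))"
    using r0 by (simp add: algebra_simps)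
  also have "\<dots> = (if d dvd p2 then of_int d * unity_root (d * c) (- (p2 * r0)) else 0)"
    using sum_unity_root_progression[OF d c, of "- (p2 * r0)" "- p2"] by simp
  also have "\<dots> = (if d dvd p2 then of_int d * unity_root c (- ((p2 * p3 div d\<^sup>2) * w)) else 0)"
  proof (cases "d dvd p2")
    case True
    then obtain s where s: "p2 = d * s" ..
    have "unity_root (d * c) (- (p2 * r0)) = unity_root c (- (s * r0))"
      using d s unity_root_mult_cancel[of d c "- (s * r0)"] by (simp add: mult.assoc)
    also have "\<dots> = unity_root c (- ((p2 * p3 div d\<^sup>2) * w))"
    proof (rule unity_root_cong)
      have "p2 * p3 div d\<^sup>2 = s * q"
        using s q d by (simp add: power2_eq_square mult_ac)
      moreover have "[s * r0 = s * (w * q)] (mod c)"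
        by (rule cong_scalar_left) (simp add: r0_def cong_def)
      ultimately show "[- (s * r0) = - ((p2 * p3 div d\<^sup>2) * w)] (mod c)"
        by (simp add: cong_minus_minus_iff mult_ac)
    qed
    finally show ?thesis by simp
  qed simp
  finally show ?thesis
    using True by simp
qed

lemma sum_over_gcd_class:
  fixes k d \<alpha> \<beta> p1 p2 p3 :: int
  assumes d: "d > 0" "d dvd k" and k: "k \<ge> 1" and \<alpha>: "coprime \<alpha> k"
    and \<beta>: "d dvd p2 \<and> d dvd p3 \<Longrightarrow> [\<alpha> * \<beta> = 1] (mod (k div d))"
  shows "(\<Sum>u\<in>reduced_residues (k div d). \<Sum>x2\<in>{0..<k}.
      if k dvd d * u * x2 * \<alpha> - p3 then unity_root k (- (p1 * (d * u)) - p2 * x2) else 0) =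
    (if d dvd p2 \<and> d dvd p3 then of_int d * kloosterman (p1 * \<beta>) (p2 * p3 div d\<^sup>2) (k div d) else 0)"
proof -
  define c where "c = k div d"
  have kdc: "k = d * c"
    using d by (simp add: c_def)
  have c: "c > 0"
    using k d(1) kdc zero_less_mult_pos[of d c] by simp
  define b where "b = p2 * p3 div d\<^sup>2"
  define P where "P \<longleftrightarrow> d dvd p2 \<and> d dvd p3"
  have inner: "(\<Sum>x2\<in>{0..<k}.
      if k dvd d * u * x2 * \<alpha> - p3 then unity_root k (- (p1 * (d * u)) - p2 * x2) else 0) =
    unity_root c (- (p1 * u)) *
      (if P then of_int d * unity_root c (- (b * modular_inverse c (\<alpha> * u))) else 0)"
    if "u \<in> reduced_residues c" for u
  proof -
    have "coprime (\<alpha> * u) c"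
      using that \<alpha> kdc by (simp add: reduced_residues_def)
    then have inv: "[(\<alpha> * u) * modular_inverse c (\<alpha> * u) = 1] (mod c)"
      by (rule cong_modular_inverse1)
    have "unity_root k (- (p1 * (d * u))) = unity_root c (- (p1 * u))"
      using d kdc unity_root_mult_cancel[of d c "- (p1 * u)"] by (simp add: mult_ac)
    then have "(if k dvd d * u * x2 * \<alpha> - p3 then unity_root k (- (p1 * (d * u)) - p2 * x2) else 0) =
        unity_root c (- (p1 * u)) *
          (if k dvd d * (\<alpha> * u) * x2 - p3 then unity_root k (- (p2 * x2)) else 0)" for x2
      using unity_root_add[of k "- (p1 * (d * u))" "- (p2 * x2)"] by (simp add: mult_ac)
    then have "(\<Sum>x2\<in>{0..<k}.
        if k dvd d * u * x2 * \<alpha> - p3 then unity_root k (- (p1 * (d * u)) - p2 * x2) else 0) =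
      unity_root c (- (p1 * u)) * (\<Sum>x2\<in>{0..<k}.
        if k dvd d * (\<alpha> * u) * x2 - p3 then unity_root k (- (p2 * x2)) else 0)"
      by (simp only: sum_distrib_left)
    also have "\<dots> = unity_root c (- (p1 * u)) *
        (if P then of_int d * unity_root c (- (b * modular_inverse c (\<alpha> * u))) else 0)"
      using sum_linear_congruence_solutions[OF d(1) c inv, of p3 p2, folded kdc]
      by (simp add: P_def b_def)
    finally show ?thesis .
  qed
  show ?thesis
  proof (cases P)
    case True
    then have "[\<alpha> * \<beta> = 1] (mod c)"
      using \<beta> by (simp add: P_def c_def)
    then show ?thesis
      using True inner kloosterman_reindex[OF c, of \<alpha> \<beta> p1 b]
      by (simp add: c_def[symmetric] b_def[symmetric] P_def[symmetric] sum_distrib_left mult_ac)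
  next
    case False
    then show ?thesis
      using inner by (simp add: c_def[symmetric] P_def[symmetric])
  qed
qed

theorem mainTheorem9:
  fixes k \<alpha> p1 p2 p3 :: int and abar :: "int \<Rightarrow> int"
  assumes "k \<ge> 1" and "coprime \<alpha> k"
    and "\<And>f. f > 0 \<Longrightarrow> f dvd gcd (gcd p2 p3) k \<Longrightarrow> [\<alpha> * abar f = 1] (mod (k div f))"
  shows "Asum p1 p2 p3 \<alpha> k =
    of_int k * (\<Sum>f\<in>{f. f > 0 \<and> f dvd gcd (gcd p2 p3) k}.
       of_int f * kloosterman (p1 * abar f) ((p2 * p3) div (f^2)) (k div f))"
proof -
  define T where "T = {d::int. d > 0 \<and> d dvd k}"
  define K where "K d = of_int d * kloosterman (p1 * abar d) ((p2 * p3) div (d^2)) (k div d)" for d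
  define H where "H x1 = (\<Sum>x2\<in>{0..<k}.
    if k dvd x1 * x2 * \<alpha> - p3 then unity_root k (- (p1 * x1) - p2 * x2) else 0)" for x1
  have "finite T"
    unfolding T_def using assms(1) by (simp add: finite_pos_divisors)
  have "Asum p1 p2 p3 \<alpha> k = of_int k * (\<Sum>x1\<in>{0..<k}. H x1)"
    unfolding H_def using assms(1) by (rule Asum_eq_sum_solutions)
  also have "(\<Sum>x1\<in>{0..<k}. H x1) = (\<Sum>d\<in>T. \<Sum>u\<in>reduced_residues (k div d). H (d * u))"
    unfolding T_def using assms(1) by (rule sum_by_gcd)
  also have "\<dots> = (\<Sum>d\<in>T. if d dvd p2 \<and> d dvd p3 then K d else 0)"
    unfolding H_def K_def T_def using assms by (intro sum.cong refl sum_over_gcd_class) auto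
  also have "\<dots> = (\<Sum>d\<in>{d\<in>T. d dvd p2 \<and> d dvd p3}. K d)"
    using \<open>finite T\<close> by (simp add: sum.inter_filter)
  also have "{d\<in>T. d dvd p2 \<and> d dvd p3} = {f. f > 0 \<and> f dvd gcd (gcd p2 p3) k}"
    unfolding T_def by auto
  finally show ?thesis
    unfolding K_def .
qed

end
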